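(* Let $\alpha\in\mathbb{R}$. Then $\alpha$ is a weak-Bryuno number if and only if $\alpha$ is a Bryuno number.
   Context: Dimension $d=1$. For $x\in\mathbb{R}$, $\|x\|:=\min_{l\in\mathbb{Z}}|x-l|$. Bryuno: with $\Omega_\alpha(N):=\min_{\ell\in\mathbb{Z},\,0<|\ell|\le N}\|\alpha\ell\|$, $\alpha$ is a Bryuno number if $\sum_{k\ge1}2^{-k}\log\frac{1}{\Omega_\alpha(2^k)}<+\infty$ (this requires $\alpha$ irrational). Weak-Bryuno (with $\mathbb{S}^0=\{-1,1\}$): for $\ell\in\mathbb{Z}$, $\beta\in\{\pm1\}$, $\delta\in\mathbb{R}$, $\Phi(\ell,\beta,\delta):=e^{2\pi|\ell\beta|\delta}=e^{2\pi|\ell|\delta}$. Given $C>0$, $N\in\mathbb{N}$ and $c=\{c_n\}\in\ell^1(\mathbb{R}^+)$ let $g(c,n,\ell):=1$ if $2^n<|\ell|\le2^{n+1}$, $:=e^{-2^nc_n}$ if $0<|\ell|\le2^n$, $:=0$ otherwise. Fix $\mathfrak{d}>0$, set $\delta_{\beta,n}:=\mathfrak{d}$ for $n=1,\dots,N$, and for $n\ge N$ recursively $\tilde\delta_{\beta,n+1}:=\max\{\delta\le\delta_{\beta,n}:\frac{\Phi(\ell,\beta,\delta)}{\|\alpha\ell\|}g(c,n,\ell)\le\max_{\bar\beta\in\{\pm1\}}\Phi(\ell,\bar\beta,\delta_{\bar\beta,n})\ \forall\ell\in\mathbb{Z},\ 0<|\ell|\le2^{n+1}\}$ and $\delta_{\beta,n+1}:=\min_{\bar\beta\in\{\pm1\},|\beta-\bar\beta|<e^{-2^nc_n}}\tilde\delta_{\bar\beta,n+1}$.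 $\alpha$ is a weak-Bryuno number if for every $\mathfrak{d}>0$ there exist $C$, $c$, $N$ with $\inf_{\beta\in\{\pm1\}}\inf_{n\in\mathbb{N}}\delta_{\beta,n}>0$. *)

theory Defs
  imports Complex_Main
begin

definition dZ :: "real \<Rightarrow> real" where
  "dZ x = (INF l::int. \<bar>x - of_int l\<bar>)"

definition Omega :: "real \<Rightarrow> nat \<Rightarrow> real" where
  "Omega \<alpha> N = Min {dZ (\<alpha> * of_int l) | l::int. 0 < \<bar>l\<bar> \<and> \<bar>l\<bar> \<le> int N}"

text \<open>Since \<open>log(1/0) = +\<infinity>\<close>,
  finiteness requires all \<open>\<Omega>(2^k) > 0\<close>; the terms are then nonnegative, so finiteness
  of the sum is summability.\<close>
definition bryuno :: "real \<Rightarrow> bool" where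
  "bryuno \<alpha> \<longleftrightarrow> (\<forall>k\<ge>1. Omega \<alpha> (2 ^ k) > 0) \<and>
     summable (\<lambda>k. (1/2) ^ (k+1) * ln (1 / Omega \<alpha> (2 ^ (k+1))))"

definition Phi :: "int \<Rightarrow> real \<Rightarrow> real \<Rightarrow> real" where
  "Phi l \<beta> \<delta> = exp (2 * pi * \<bar>of_int l * \<beta>\<bar> * \<delta>)"

definition gfun :: "(nat \<Rightarrow> real) \<Rightarrow> nat \<Rightarrow> int \<Rightarrow> real" where
  "gfun c n l =
     (if 2 ^ n < \<bar>l\<bar> \<and> \<bar>l\<bar> \<le> 2 ^ (n+1) then 1
      else if 0 < \<bar>l\<bar> \<and> \<bar>l\<bar> \<le> 2 ^ n then exp (- (2 ^ n * c n))
      else 0)"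

text \<open>The condition
  \<open>\<Phi>(l,\<beta>,\<delta>) g(c,n,l) / \<parallel>\<alpha> l\<parallel> \<le> max_\<beta>' \<Phi>(l,\<beta>',\<delta>_{\<beta>',n})\<close> is written with
  the denominator cleared (g > 0 on the relevant range, so \<open>\<parallel>\<alpha> l\<parallel> = 0\<close> means the
  left side is \<open>+\<infinity>\<close> and the condition fails).\<close>
definition tilde_set ::
  "real \<Rightarrow> (nat \<Rightarrow> real) \<Rightarrow> (nat \<Rightarrow> real \<Rightarrow> real) \<Rightarrow> nat \<Rightarrow> real \<Rightarrow> real set" where
  "tilde_set \<alpha> c \<delta> n \<beta> =
     {x. x \<le> \<delta> n \<beta> \<and>
        (\<forall>l::int. 0 < \<bar>l\<bar> \<and> \<bar>l\<bar> \<le> 2 ^ (n+1) \<longrightarrow>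
           Phi l \<beta> x * gfun c n l
             \<le> dZ (\<alpha> * of_int l) * Max {Phi l b (\<delta> n b) | b. b \<in> {-1, 1}})}"

text \<open>\<open>\<delta>\<close> is the (unique, if it exists) sequence \<open>\<delta>_{\<beta>,n}\<close>, n \<ge> 1, \<beta> \<in> {-1,1},
  produced by the recursion; existence of every maximum is part of the requirement.\<close>
definition wb_seq ::
  "real \<Rightarrow> real \<Rightarrow> (nat \<Rightarrow> real) \<Rightarrow> nat \<Rightarrow> (nat \<Rightarrow> real \<Rightarrow> real) \<Rightarrow> bool" where
  "wb_seq \<alpha> d c N \<delta> \<longleftrightarrow>
     (\<forall>n \<beta>. 1 \<le> n \<and> n \<le> N \<and> \<beta> \<in> {-1, 1} \<longrightarrow> \<delta> n \<beta> = d) \<and>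
     (\<forall>n\<ge>N. \<exists>t :: real \<Rightarrow> real.
        (\<forall>b\<in>{-1, 1}. t b \<in> tilde_set \<alpha> c \<delta> n b \<and> (\<forall>x\<in>tilde_set \<alpha> c \<delta> n b. x \<le> t b)) \<and>
        (\<forall>\<beta>\<in>{-1, 1}. \<delta> (Suc n) \<beta> =
           Min {t b | b. b \<in> {-1, 1} \<and> \<bar>\<beta> - b\<bar> < exp (- (2 ^ n * c n))}))"

definition weak_bryuno :: "real \<Rightarrow> bool" where
  "weak_bryuno \<alpha> \<longleftrightarrow>
     (\<forall>d>0. \<exists>C::real. C > 0 \<and> (\<exists>c::nat \<Rightarrow> real. (\<forall>n. c n > 0) \<and> summable c \<and>
        (\<exists>N::nat. N \<ge> 1 \<and> (\<exists>\<delta>. wb_seq \<alpha> d c N \<delta> \<and>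
           (\<exists>\<epsilon>>0. \<forall>n\<ge>1. \<forall>\<beta>\<in>{-1, 1}. \<epsilon> \<le> \<delta> n \<beta>)))))"

end

theory Submission
  imports Defs
begin

text \<open>Since \<open>\<Phi>(l,\<beta>,\<delta>)\<close> does not depend on \<open>\<beta> \<in> {-1,1}\<close> and \<open>exp(-2^n c_n) < 1\<close>, the
  minimum in the recursion is over \<open>\<beta>\<close> alone, and after taking logarithms the admissibility
  condition reads \<open>\<delta>_(\<beta>,n+1) \<le> m_n + ln (\<parallel>\<alpha> l\<parallel> / g(c,n,l)) / (2\<pi>|l|)\<close> for every
  \<open>0 < |l| \<le> 2^(n+1)\<close>, where \<open>m_n = max_\<beta> \<delta>_(\<beta>,n)\<close>.
  If \<open>\<delta>\<close> stays bounded below, the decreasing sequence \<open>m_n\<close> has finite total drop, and since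
  \<open>|l| \<le> 2^(n+1)\<close> and \<open>ln (1/g) \<le> 2^n c_n\<close>, this bounds \<open>2^-(n+1) ln (1/\<Omega>(2^(n+1)))\<close> by a
  summable sequence.
  Conversely, for a Bryuno number the choice \<open>c_n = 2^-n (ln (1/\<Omega>(2^(n+1))) + 1)\<close> makes the
  modes \<open>|l| \<le> 2^n\<close> harmless, while the modes \<open>2^n < |l| \<le> 2^(n+1)\<close> cost at most
  \<open>2^-(n+1) ln (1/\<Omega>(2^(n+1))) / \<pi>\<close>; starting the recursion late enough keeps the total
  drop below \<open>d/2\<close>.\<close>

lemma dZ_nonneg: "0 \<le> dZ x"
  unfolding dZ_def by (rule cINF_greatest) auto

lemma dZ_less_one: "dZ x < 1"
proof -
  have "dZ x \<le> \<bar>x - of_int \<lfloor>x\<rfloor>\<bar>"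
    unfolding dZ_def by (rule cINF_lower) (auto intro: bdd_belowI[where m=0])
  also have "\<dots> < 1" by linarith
  finally show ?thesis .
qed

lemma finite_nonzero_abs_le: "finite {l::int. 0 < \<bar>l\<bar> \<and> \<bar>l\<bar> \<le> M}"
  by (rule finite_subset[of _ "{-M..M}"]) auto

lemma abs_le_two_power: "\<bar>l::int\<bar> \<le> 2 ^ (k + nat \<bar>l\<bar>)"
proof -
  have "nat \<bar>l\<bar> < 2 ^ (k + nat \<bar>l\<bar>)"
    by (intro less_le_trans[OF less_exp] power_increasing) auto
  then have "int (nat \<bar>l\<bar>) < int (2 ^ (k + nat \<bar>l\<bar>))"
    by (simp only: of_nat_less_iff)
  then show ?thesis
    by simp
qed

lemma Omega_le_dZ: "0 < \<bar>l\<bar> \<Longrightarrow> \<bar>l\<bar> \<le> int N \<Longrightarrow> Omega \<alpha> N \<le> dZ (\<alpha> * of_int l)"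
  unfolding Omega_def setcompr_eq_image
  by (rule Min_le[OF finite_imageI[OF finite_nonzero_abs_le]]) auto

lemma Omega_attained:
  assumes "1 \<le> N"
  obtains l :: int where "0 < \<bar>l\<bar>" "\<bar>l\<bar> \<le> int N" "Omega \<alpha> N = dZ (\<alpha> * of_int l)"
proof -
  have "{l::int. 0 < \<bar>l\<bar> \<and> \<bar>l\<bar> \<le> int N} \<noteq> {}"
    using assms by (auto intro!: exI[of _ 1])
  then have "Omega \<alpha> N \<in> (\<lambda>l. dZ (\<alpha> * of_int l)) ` {l. 0 < \<bar>l\<bar> \<and> \<bar>l\<bar> \<le> int N}"
    unfolding Omega_def setcompr_eq_image
    by (intro Min_in finite_imageI finite_nonzero_abs_le) auto
  then show ?thesis using that by blast
qed

lemma Omega_less_one: "1 \<le> N \<Longrightarrow> Omega \<alpha> N < 1"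
  by (metis Omega_attained dZ_less_one)

lemma Omega_pos:
  assumes "\<And>l. l \<noteq> 0 \<Longrightarrow> 0 < dZ (\<alpha> * of_int l)" and "1 \<le> N"
  shows "0 < Omega \<alpha> N"
  by (metis Omega_attained assms abs_zero less_irrefl)

lemma gfun_pos: "0 < \<bar>l\<bar> \<Longrightarrow> \<bar>l\<bar> \<le> 2 ^ (n+1) \<Longrightarrow> 0 < gfun c n l"
  unfolding gfun_def by auto

lemma ln_gfun_ge:
  "0 \<le> c n \<Longrightarrow> 0 < \<bar>l\<bar> \<Longrightarrow> \<bar>l\<bar> \<le> 2 ^ (n+1) \<Longrightarrow> - (2 ^ n * c n) \<le> ln (gfun c n l)"
  unfolding gfun_def by auto

lemma Phi_sign: "b \<in> {-1, 1} \<Longrightarrow> Phi l b x = exp (2 * pi * \<bar>of_int l\<bar> * x)"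
  unfolding Phi_def by auto

lemma Max_Phi_sign:
  "Max {Phi l b (\<delta> n b) | b. b \<in> {-1, 1::real}}
     = exp (2 * pi * \<bar>of_int l\<bar> * max (\<delta> n 1) (\<delta> n (-1)))"
proof -
  have "{Phi l b (\<delta> n b) | b. b \<in> {-1, 1::real}} = {Phi l (-1) (\<delta> n (-1)), Phi l 1 (\<delta> n 1)}"
    by auto
  moreover have "max (exp a) (exp b) = exp (max a b)" for a b :: real
    by (auto simp: max_def)
  ultimately show ?thesis
    by (simp add: Phi_sign max_mult_distrib_left max.commute)
qed

lemma exp_mult_le_iff:
  fixes A g z x D :: real
  assumes "0 < A" "0 < g" "0 < z"
  shows "exp (A * x) * g \<le> z * exp (A * D) \<longleftrightarrow> x \<le> D + ln (z / g) / A"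
proof -
  have "exp (A * x) * g \<le> z * exp (A * D) \<longleftrightarrow> exp (A * x) \<le> exp (ln (z / g) + A * D)"
    using assms by (simp add: exp_add field_simps)
  also have "\<dots> \<longleftrightarrow> x \<le> D + ln (z / g) / A"
    using assms by (simp add: field_simps)
  finally show ?thesis .
qed

definition slack :: "real \<Rightarrow> (nat \<Rightarrow> real) \<Rightarrow> nat \<Rightarrow> int \<Rightarrow> real" where
  "slack \<alpha> c n l = ln (dZ (\<alpha> * of_int l) / gfun c n l) / (2 * pi * \<bar>of_int l\<bar>)"

lemma mem_tilde_set_iff:
  assumes "\<beta> \<in> {-1, 1}"
    and dZ_pos: "\<And>l. 0 < \<bar>l\<bar> \<Longrightarrow> \<bar>l\<bar> \<le> 2 ^ (n+1) \<Longrightarrow> 0 < dZ (\<alpha> * of_int l)"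
  shows "x \<in> tilde_set \<alpha> c \<delta> n \<beta> \<longleftrightarrow> x \<le> \<delta> n \<beta> \<and>
    (\<forall>l::int. 0 < \<bar>l\<bar> \<and> \<bar>l\<bar> \<le> 2 ^ (n+1) \<longrightarrow> x \<le> max (\<delta> n 1) (\<delta> n (-1)) + slack \<alpha> c n l)"
proof -
  have "Phi l \<beta> x * gfun c n l \<le> dZ (\<alpha> * of_int l) * Max {Phi l b (\<delta> n b) | b. b \<in> {-1, 1}}
      \<longleftrightarrow> x \<le> max (\<delta> n 1) (\<delta> n (-1)) + slack \<alpha> c n l"
    if l: "0 < \<bar>l\<bar>" "\<bar>l\<bar> \<le> 2 ^ (n+1)" for l
    unfolding Max_Phi_sign Phi_sign[OF assms(1)] slack_def mult.assoc[symmetric]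
    by (rule exp_mult_le_iff) (use l dZ_pos gfun_pos in auto)
  then show ?thesis
    unfolding tilde_set_def by auto
qed

lemma tilde_set_le: "x \<in> tilde_set \<alpha> c \<delta> n \<beta> \<Longrightarrow> x \<le> \<delta> n \<beta>"
  by (simp add: tilde_set_def)

lemma tilde_set_imp_dZ_pos:
  assumes "x \<in> tilde_set \<alpha> c \<delta> n \<beta>" "0 < \<bar>l\<bar>" "\<bar>l\<bar> \<le> 2 ^ (n+1)"
  shows "0 < dZ (\<alpha> * of_int l)"
proof -
  have "0 < Phi l \<beta> x * gfun c n l"
    using gfun_pos[OF assms(2,3)] by (simp add: Phi_def)
  also have "\<dots> \<le> dZ (\<alpha> * of_int l) * exp (2 * pi * \<bar>of_int l\<bar> * max (\<delta> n 1) (\<delta> n (-1)))"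
    using assms unfolding tilde_set_def Max_Phi_sign by auto
  finally show ?thesis
    using dZ_nonneg by (simp add: zero_less_mult_iff)
qed

text \<open>The minimum in the recursion runs over \<open>\<beta>\<close> alone, because \<open>|\<beta> - \<beta>'| \<in> {0, 2}\<close>
  on \<open>{-1,1}\<close>.\<close>

lemma Min_sign_neighbourhood:
  fixes t :: "real \<Rightarrow> 'a::linorder"
  assumes "\<beta> \<in> {-1, 1}" "0 < e" "e \<le> 1"
  shows "Min {t b | b. b \<in> {-1, 1} \<and> \<bar>\<beta> - b\<bar> < e} = t \<beta>"
proof -
  have "{t b | b. b \<in> {-1, 1} \<and> \<bar>\<beta> - b\<bar> < e} = {t \<beta>}"
    using assms by (auto intro!: exI[of _ \<beta>])
  then show ?thesis by simp
qed

lemma Min_sign_neighbourhood_exp: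
  fixes c :: "nat \<Rightarrow> real" and t :: "real \<Rightarrow> 'a::linorder"
  assumes "\<beta> \<in> {-1, 1}" "0 \<le> c n"
  shows "Min {t b | b. b \<in> {-1, 1} \<and> \<bar>\<beta> - b\<bar> < exp (- (2 ^ n * c n))} = t \<beta>"
  using assms by (intro Min_sign_neighbourhood) auto

lemma wb_seq_SucD:
  assumes "wb_seq \<alpha> d c N \<delta>" "0 \<le> c n" "N \<le> n" "\<beta> \<in> {-1, 1}"
  shows "\<delta> (Suc n) \<beta> \<in> tilde_set \<alpha> c \<delta> n \<beta>"
proof -
  obtain t where t_max: "\<forall>b\<in>{-1, 1}. t b \<in> tilde_set \<alpha> c \<delta> n b"
    and t_sel: "\<forall>\<beta>\<in>{-1, 1}.
      \<delta> (Suc n) \<beta> = Min {t b | b. b \<in> {-1, 1} \<and> \<bar>\<beta> - b\<bar> < exp (- (2 ^ n * c n))}"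
    using assms(1)[unfolded wb_seq_def, THEN conjunct2, rule_format, OF assms(3)] by blast
  have "\<delta> (Suc n) \<beta> = t \<beta>"
    using bspec[OF t_sel assms(4)] Min_sign_neighbourhood_exp[where c=c and n=n, OF assms(4,2)] by (rule trans)
  then show ?thesis
    using bspec[OF t_max assms(4)] by simp
qed

lemma wb_seqI:
  fixes c :: "nat \<Rightarrow> real"
  assumes "\<And>n. 0 \<le> c n"
    and "\<And>n \<beta>. 1 \<le> n \<Longrightarrow> n \<le> N \<Longrightarrow> \<beta> \<in> {-1, 1} \<Longrightarrow> \<delta> n \<beta> = d"
    and "\<And>n \<beta>. N \<le> n \<Longrightarrow> \<beta> \<in> {-1, 1} \<Longrightarrow> \<delta> (Suc n) \<beta> \<in> tilde_set \<alpha> c \<delta> n \<beta>"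
    and "\<And>n \<beta> x. N \<le> n \<Longrightarrow> \<beta> \<in> {-1, 1} \<Longrightarrow> x \<in> tilde_set \<alpha> c \<delta> n \<beta> \<Longrightarrow> x \<le> \<delta> (Suc n) \<beta>"
  shows "wb_seq \<alpha> d c N \<delta>"
  unfolding wb_seq_def
proof (intro conjI allI impI)
  show "\<delta> n \<beta> = d" if "1 \<le> n \<and> n \<le> N \<and> \<beta> \<in> {-1, 1}" for n \<beta>
    using assms(2) that by blast
  fix n assume "N \<le> n"
  show "\<exists>t. (\<forall>b\<in>{-1, 1}. t b \<in> tilde_set \<alpha> c \<delta> n b \<and> (\<forall>x\<in>tilde_set \<alpha> c \<delta> n b. x \<le> t b)) \<and>
      (\<forall>\<beta>\<in>{-1, 1}. \<delta> (Suc n) \<beta> =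
        Min {t b | b. b \<in> {-1, 1} \<and> \<bar>\<beta> - b\<bar> < exp (- (2 ^ n * c n))})"
  proof (intro exI[of _ "\<delta> (Suc n)"] conjI ballI)
    fix \<beta> :: real assume "\<beta> \<in> {-1, 1}"
    show "\<delta> (Suc n) \<beta> \<in> tilde_set \<alpha> c \<delta> n \<beta>"
      using assms(3) \<open>N \<le> n\<close> \<open>\<beta> \<in> {-1, 1}\<close> .
    show "x \<le> \<delta> (Suc n) \<beta>" if "x \<in> tilde_set \<alpha> c \<delta> n \<beta>" for x
      using assms(4) \<open>N \<le> n\<close> \<open>\<beta> \<in> {-1, 1}\<close> that .
    show "\<delta> (Suc n) \<beta> = Min {\<delta> (Suc n) b | b. b \<in> {-1, 1} \<and> \<bar>\<beta> - b\<bar> < exp (- (2 ^ n * c n))}"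
      using Min_sign_neighbourhood_exp[OF \<open>\<beta> \<in> {-1, 1}\<close> assms(1)] by (rule sym)
  qed
qed

lemma tilde_set_ln_bound:
  assumes mem: "x \<in> tilde_set \<alpha> c \<delta> n \<beta>" and \<beta>: "\<beta> \<in> {-1, 1}" and "0 \<le> c n"
    and l: "0 < \<bar>l\<bar>" "\<bar>l\<bar> \<le> 2 ^ (n+1)"
  shows "(1/2) ^ (n+1) * ln (1 / dZ (\<alpha> * of_int l))
           \<le> c n / 2 + 2 * pi * (max (\<delta> n 1) (\<delta> n (-1)) - x)"
proof -
  define m where "m = max (\<delta> n 1) (\<delta> n (-1))"
  define A where "A = 2 * pi * \<bar>of_int l\<bar>"
  have A_pos: "0 < A"
    using l(1) by (simp add: A_def)
  have dZ_pos: "0 < dZ (\<alpha> * of_int l)"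
    using tilde_set_imp_dZ_pos[OF mem l] .
  have "x \<le> \<delta> n \<beta>" and "x \<le> m + slack \<alpha> c n l"
    using mem l mem_tilde_set_iff[OF \<beta> tilde_set_imp_dZ_pos[OF mem]] unfolding m_def by blast+
  then have drop_nonneg: "0 \<le> m - x" and "(x - m) * A \<le> ln (dZ (\<alpha> * of_int l) / gfun c n l)"
    using \<beta> A_pos by (auto simp: m_def slack_def A_def pos_le_divide_eq[symmetric])
  moreover have "ln (dZ (\<alpha> * of_int l) / gfun c n l) = ln (dZ (\<alpha> * of_int l)) - ln (gfun c n l)"
    using dZ_pos gfun_pos[OF l, of c] by (simp add: ln_div)
  moreover have "A * (m - x) = - ((x - m) * A)"
    by (simp add: algebra_simps)
  ultimately have "ln (1 / dZ (\<alpha> * of_int l)) \<le> A * (m - x) - ln (gfun c n l)"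
    using dZ_pos by (simp add: ln_div)
  also have "\<dots> \<le> 2 * pi * 2 ^ (n+1) * (m - x) + 2 ^ n * c n"
  proof (subst diff_conv_add_uminus, rule add_mono)
    have "\<bar>of_int l\<bar> \<le> (2::real) ^ (n+1)"
      using l(2) by (metis of_int_abs of_int_le_iff of_int_numeral of_int_power)
    then show "A * (m - x) \<le> 2 * pi * 2 ^ (n+1) * (m - x)"
      unfolding A_def using drop_nonneg by (intro mult_right_mono) auto
    show "- ln (gfun c n l) \<le> 2 ^ n * c n"
      using ln_gfun_ge[of c n l] assms(3) l by simp
  qed
  finally show ?thesis
    by (simp add: m_def field_simps)
qed

lemma summable_telescope_decseq_bounded:
  fixes m :: "nat \<Rightarrow> real"
  assumes "\<And>n. N \<le> n \<Longrightarrow> m (Suc n) \<le> m n" and "\<And>n. N \<le> n \<Longrightarrow> B \<le> m n"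
  shows "summable (\<lambda>n. m n - m (Suc n))"
proof -
  have "decseq (\<lambda>j. m (j + N))"
    by (rule decseq_SucI) (simp add: assms(1))
  moreover have "B \<le> m (j + N)" for j
    using assms(2) by simp
  ultimately obtain L where "(\<lambda>j. m (j + N)) \<longlonglongrightarrow> L"
    using decseq_convergent by blast
  then show ?thesis
    using LIMSEQ_offset telescope_summable' by blast
qed

lemma weak_bryuno_imp_bryuno:
  assumes "weak_bryuno \<alpha>"
  shows "bryuno \<alpha>"
proof -
  from assms obtain c N \<delta> \<epsilon> where c_pos: "\<And>n. 0 < c n" and "summable c" and "1 \<le> N"
    and "wb_seq \<alpha> 1 c N \<delta>" and \<delta>_ge: "\<forall>n\<ge>1. \<forall>\<beta>\<in>{-1, 1}. \<epsilon> \<le> \<delta> n \<beta>"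
    unfolding weak_bryuno_def by (metis zero_less_one)
  have step: "\<delta> (Suc n) \<beta> \<in> tilde_set \<alpha> c \<delta> n \<beta>" if "N \<le> n" "\<beta> \<in> {-1, 1}" for n \<beta>
    using wb_seq_SucD[OF \<open>wb_seq \<alpha> 1 c N \<delta>\<close> less_imp_le[OF c_pos] that] .
  define m where "m n = max (\<delta> n 1) (\<delta> n (-1))" for n
  have dZ_pos: "0 < dZ (\<alpha> * of_int l)" if "l \<noteq> 0" for l
    using that abs_le_two_power[of l "N + 1"]
      tilde_set_imp_dZ_pos[OF step[of "N + nat \<bar>l\<bar>" 1]] by (simp add: algebra_simps)
  have Omega_gt_0: "0 < Omega \<alpha> k" if "1 \<le> k" for k
    using Omega_pos[OF dZ_pos that] .
  have "summable (\<lambda>n. m n - m (Suc n))"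
  proof (rule summable_telescope_decseq_bounded)
    show "m (Suc n) \<le> m n" if "N \<le> n" for n
      unfolding m_def
      using tilde_set_le[OF step[OF that, of 1]] tilde_set_le[OF step[OF that, of "-1"]]
      by (rule max.mono) simp_all
    show "\<epsilon> \<le> m n" if "N \<le> n" for n
      using \<delta>_ge[rule_format, of n 1] that \<open>1 \<le> N\<close> by (simp add: m_def le_max_iff_disj)
  qed
  then have "summable (\<lambda>n. c n / 2 + 2 * pi * (m n - m (Suc n)))"
    using \<open>summable c\<close> by (intro summable_add summable_divide summable_mult)
  then have "summable (\<lambda>k. (1/2) ^ (k+1) * ln (1 / Omega \<alpha> (2 ^ (k+1))))"
  proof (rule summable_comparison_test')
    fix n assume "N \<le> n"
    obtain l where l: "0 < \<bar>l\<bar>" "\<bar>l\<bar> \<le> 2 ^ (n+1)" "Omega \<alpha> (2 ^ (n+1)) = dZ (\<alpha> * of_int l)"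
      using Omega_attained[of "2 ^ (n+1)" \<alpha>] by auto
    obtain \<beta> where \<beta>: "\<beta> \<in> {-1, 1}" and "\<delta> (Suc n) \<beta> = m (Suc n)"
      unfolding m_def by (metis insertCI max_def)
    then have "(1/2) ^ (n+1) * ln (1 / Omega \<alpha> (2 ^ (n+1))) \<le> c n / 2 + 2 * pi * (m n - m (Suc n))"
      using tilde_set_ln_bound[OF step[OF \<open>N \<le> n\<close> \<beta>] \<beta> less_imp_le[OF c_pos] l(1,2)] l(3)
      by (simp add: m_def)
    moreover have "0 \<le> ln (1 / Omega \<alpha> (2 ^ (n+1)))"
      using Omega_gt_0[of "2 ^ (n+1)"] Omega_less_one[of "2 ^ (n+1)" \<alpha>] by simp
    ultimately show "norm ((1/2) ^ (n+1) * ln (1 / Omega \<alpha> (2 ^ (n+1))))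
        \<le> c n / 2 + 2 * pi * (m n - m (Suc n))"
      by simp
  qed
  then show ?thesis
    unfolding bryuno_def using Omega_gt_0 by simp
qed

lemma slack_ge:
  assumes Omega_gt_0: "0 < Omega \<alpha> (2 ^ (n+1))"
    and c_large: "ln (1 / Omega \<alpha> (2 ^ (n+1))) \<le> 2 ^ n * c n"
    and l: "0 < \<bar>l\<bar>" "\<bar>l\<bar> \<le> 2 ^ (n+1)"
  shows "- ((1/2) ^ (n+1) * ln (1 / Omega \<alpha> (2 ^ (n+1))) / pi) \<le> slack \<alpha> c n l"
proof -
  define L where "L = ln (1 / Omega \<alpha> (2 ^ (n+1)))"
  define z where "z = dZ (\<alpha> * of_int l)"
  have "Omega \<alpha> (2 ^ (n+1)) \<le> z"
    using l by (simp add: z_def Omega_le_dZ)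
  then have z_pos: "0 < z" and ln_z: "- L \<le> ln z"
    using Omega_gt_0 by (simp_all add: L_def ln_div)
  have L_nonneg: "0 \<le> L"
    using Omega_gt_0 Omega_less_one[of "2 ^ (n+1)" \<alpha>] by (simp add: L_def)
  show ?thesis
  proof (cases "2 ^ n < \<bar>l\<bar>")
    case True
    then have "(2::real) ^ n \<le> \<bar>of_int l\<bar>"
      by (metis less_imp_le of_int_abs of_int_le_iff of_int_numeral of_int_power)
    then have "L / (2 * pi * \<bar>of_int l\<bar>) \<le> L / (2 * pi * 2 ^ n)"
      using L_nonneg l(1) by (intro divide_left_mono) auto
    also have "\<dots> = (1/2) ^ (n+1) * L / pi"
      by (simp add: field_simps)
    finally have "- ((1/2) ^ (n+1) * L / pi) \<le> - L / (2 * pi * \<bar>of_int l\<bar>)"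
      by simp
    also have "\<dots> \<le> ln z / (2 * pi * \<bar>of_int l\<bar>)"
      using ln_z l(1) by (intro divide_right_mono) auto
    finally show ?thesis
      using True l(2) by (simp add: slack_def gfun_def L_def z_def)
  next
    case False
    then have "ln (z / gfun c n l) = ln z + 2 ^ n * c n"
      using l z_pos by (simp add: gfun_def ln_div)
    then have "0 \<le> slack \<alpha> c n l"
      using ln_z c_large by (simp add: slack_def z_def L_def)
    moreover have "0 \<le> (1/2) ^ (n+1) * L / pi"
      using L_nonneg by simp
    ultimately show ?thesis
      by (simp add: L_def)
  qed
qed

text \<open>The recursion of the weak-Bryuno condition for a \<open>\<beta>\<close>-independent \<open>\<delta>\<close>; the value at
  index \<open>0\<close> is never used.\<close>

fun greedy_delta :: "real \<Rightarrow> (nat \<Rightarrow> real) \<Rightarrow> real \<Rightarrow> nat \<Rightarrow> nat \<Rightarrow> real" where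
  "greedy_delta \<alpha> c d N 0 = d"
| "greedy_delta \<alpha> c d N (Suc n) = (if n < N then d else
     Min (insert (greedy_delta \<alpha> c d N n)
       ((\<lambda>l. greedy_delta \<alpha> c d N n + slack \<alpha> c n l) ` {l. 0 < \<bar>l\<bar> \<and> \<bar>l\<bar> \<le> 2 ^ (n+1)})))"

lemma mem_tilde_set_greedy_delta_iff:
  assumes "N \<le> n" "\<beta> \<in> {-1, 1}"
    and dZ_pos: "\<And>l. 0 < \<bar>l\<bar> \<Longrightarrow> \<bar>l\<bar> \<le> 2 ^ (n+1) \<Longrightarrow> 0 < dZ (\<alpha> * of_int l)"
  shows "x \<in> tilde_set \<alpha> c (\<lambda>n _. greedy_delta \<alpha> c d N n) n \<beta>
    \<longleftrightarrow> x \<le> greedy_delta \<alpha> c d N (Suc n)"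
proof -
  define D where "D = greedy_delta \<alpha> c d N n"
  have "x \<in> tilde_set \<alpha> c (\<lambda>n _. greedy_delta \<alpha> c d N n) n \<beta>
      \<longleftrightarrow> x \<le> D \<and> (\<forall>l\<in>{l. 0 < \<bar>l\<bar> \<and> \<bar>l\<bar> \<le> 2 ^ (n+1)}. x \<le> D + slack \<alpha> c n l)"
    using mem_tilde_set_iff[OF assms(2) dZ_pos, where x=x and c=c and \<delta>="\<lambda>n _. greedy_delta \<alpha> c d N n"]
    by (simp add: D_def)
  also have "\<dots> \<longleftrightarrow> x \<le> Min (insert D ((\<lambda>l. D + slack \<alpha> c n l) ` {l. 0 < \<bar>l\<bar> \<and> \<bar>l\<bar> \<le> 2 ^ (n+1)}))"
    using finite_nonzero_abs_le by (simp add: Min_ge_iff)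
  also have "Min (insert D ((\<lambda>l. D + slack \<alpha> c n l) ` {l. 0 < \<bar>l\<bar> \<and> \<bar>l\<bar> \<le> 2 ^ (n+1)}))
      = greedy_delta \<alpha> c d N (Suc n)"
    using assms(1) by (simp add: D_def)
  finally show ?thesis .
qed

lemma greedy_delta_init: "1 \<le> n \<Longrightarrow> n \<le> N \<Longrightarrow> greedy_delta \<alpha> c d N n = d"
  by (cases n) simp_all

lemma wb_seq_greedy_delta:
  assumes "\<And>n. 0 \<le> c n" and dZ_pos: "\<And>l. l \<noteq> 0 \<Longrightarrow> 0 < dZ (\<alpha> * of_int l)"
  shows "wb_seq \<alpha> d c N (\<lambda>n _. greedy_delta \<alpha> c d N n)"
proof (rule wb_seqI)
  fix n and \<beta> :: real assume "N \<le> n" "\<beta> \<in> {-1, 1}"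
  then have "x \<in> tilde_set \<alpha> c (\<lambda>n _. greedy_delta \<alpha> c d N n) n \<beta>
      \<longleftrightarrow> x \<le> greedy_delta \<alpha> c d N (Suc n)" for x
    using dZ_pos by (intro mem_tilde_set_greedy_delta_iff) auto
  then show "greedy_delta \<alpha> c d N (Suc n) \<in> tilde_set \<alpha> c (\<lambda>n _. greedy_delta \<alpha> c d N n) n \<beta>"
    and "x \<in> tilde_set \<alpha> c (\<lambda>n _. greedy_delta \<alpha> c d N n) n \<beta>
      \<Longrightarrow> x \<le> greedy_delta \<alpha> c d N (Suc n)" for x
    by simp_all
qed (use assms(1) greedy_delta_init in auto)

lemma greedy_delta_Suc_ge:
  assumes "N \<le> n" "0 \<le> b"
    and "\<And>l. 0 < \<bar>l\<bar> \<Longrightarrow> \<bar>l\<bar> \<le> 2 ^ (n+1) \<Longrightarrow> - b \<le> slack \<alpha> c n l"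
  shows "greedy_delta \<alpha> c d N n - b \<le> greedy_delta \<alpha> c d N (Suc n)"
  using assms finite_nonzero_abs_le by (subst greedy_delta.simps) (auto simp: Min_ge_iff)

lemma ge_minus_sum_of_steps:
  fixes D b :: "nat \<Rightarrow> real"
  assumes "\<And>n. N \<le> n \<Longrightarrow> D n - b n \<le> D (Suc n)"
  shows "D N - (\<Sum>i<j. b (i + N)) \<le> D (j + N)"
proof (induction j)
  case (Suc j)
  then show ?case
    using assms[of "j + N"] by simp
qed simp

lemma greedy_delta_ge:
  assumes "1 \<le> N" "1 \<le> n" and b_nonneg: "\<And>n. 0 \<le> b n" and "summable b"
    and slack_lower: "\<And>n l. N \<le> n \<Longrightarrow> 0 < \<bar>l\<bar> \<Longrightarrow> \<bar>l\<bar> \<le> 2 ^ (n+1) \<Longrightarrow> - b n \<le> slack \<alpha> c n l"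
  shows "d - (\<Sum>i. b (i + N)) \<le> greedy_delta \<alpha> c d N n"
proof (cases "n \<le> N")
  case True
  have "0 \<le> (\<Sum>i. b (i + N))"
    using b_nonneg \<open>summable b\<close> by (intro suminf_nonneg) (auto simp: summable_iff_shift)
  then show ?thesis
    using greedy_delta_init[OF \<open>1 \<le> n\<close> True] by simp
next
  case False
  then obtain j where j: "n = j + N"
    by (metis add.commute le_add_diff_inverse nat_le_linear)
  have "(\<Sum>i<j. b (i + N)) \<le> (\<Sum>i. b (i + N))"
    using b_nonneg \<open>summable b\<close> by (intro sum_le_suminf) (auto simp: summable_iff_shift)
  moreover have "greedy_delta \<alpha> c d N N - (\<Sum>i<j. b (i + N)) \<le> greedy_delta \<alpha> c d N (j + N)"
    using greedy_delta_Suc_ge[OF _ b_nonneg slack_lower] by (rule ge_minus_sum_of_steps)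
  ultimately show ?thesis
    using greedy_delta_init[OF \<open>1 \<le> N\<close> order_refl] j by simp
qed

lemma bryuno_Omega_pos: "bryuno \<alpha> \<Longrightarrow> 1 \<le> k \<Longrightarrow> 0 < Omega \<alpha> (2 ^ k)"
  by (simp add: bryuno_def)

lemma bryuno_dZ_pos:
  assumes "bryuno \<alpha>" "l \<noteq> 0"
  shows "0 < dZ (\<alpha> * of_int l)"
proof -
  have "0 < Omega \<alpha> (2 ^ (1 + nat \<bar>l\<bar>))"
    using bryuno_Omega_pos[OF assms(1), of "1 + nat \<bar>l\<bar>"] by simp
  also have "\<dots> \<le> dZ (\<alpha> * of_int l)"
    using assms(2) abs_le_two_power[of l 1] by (intro Omega_le_dZ) auto
  finally show ?thesis .
qed

lemma bryuno_imp_weak_bryuno: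
  assumes "bryuno \<alpha>"
  shows "weak_bryuno \<alpha>"
  unfolding weak_bryuno_def
proof (intro allI impI)
  fix d :: real assume "0 < d"
  define L where "L k = ln (1 / Omega \<alpha> (2 ^ k))" for k
  have L_summable: "summable (\<lambda>k. (1/2) ^ (k+1) * L (k+1))"
    using assms by (simp add: bryuno_def L_def)
  have L_pos: "0 < L k" if "1 \<le> k" for k
    using bryuno_Omega_pos[OF assms that] Omega_less_one[of "2 ^ k" \<alpha>] by (simp add: L_def)
  define c where "c n = (1/2) ^ n * (L (n+1) + 1)" for n
  have c_pos: "\<forall>n. 0 < c n"
    using L_pos by (simp add: c_def add_pos_pos)
  have "c = (\<lambda>n. 2 * ((1/2) ^ (n+1) * L (n+1)) + (1/2) ^ n)"
    by (simp add: fun_eq_iff c_def algebra_simps)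
  then have "summable c"
    by (simp only:) (intro summable_add summable_mult summable_geometric L_summable, simp)
  define b where "b n = (1/2) ^ (n+1) * L (n+1) / pi" for n
  have b_nonneg: "0 \<le> b n" for n
    using L_pos[of "n+1"] by (simp add: b_def)
  have "summable b"
    unfolding b_def by (intro summable_divide L_summable)
  then obtain N0 where N0: "\<forall>n\<ge>N0. norm (\<Sum>i. b (i + n)) < d / 2"
    using suminf_exist_split[of "d / 2" b] \<open>0 < d\<close> by auto
  define N where "N = max 1 N0"
  have "1 \<le> N"
    by (simp add: N_def)
  have "norm (\<Sum>i. b (i + N)) < d / 2"
    using N0 by (simp add: N_def)
  then have tail_small: "(\<Sum>i. b (i + N)) < d / 2"
    by (simp add: abs_less_iff)
  have slack_bound: "- b n \<le> slack \<alpha> c n l" if "0 < \<bar>l\<bar>" "\<bar>l\<bar> \<le> 2 ^ (n+1)" for n l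
  proof -
    have "L (n+1) \<le> 2 ^ n * c n"
      by (simp add: c_def mult.assoc[symmetric] power_mult_distrib[symmetric])
    then show ?thesis
      using slack_ge[OF bryuno_Omega_pos[OF assms le_add2] _ that] by (simp add: b_def L_def)
  qed
  define \<delta> :: "nat \<Rightarrow> real \<Rightarrow> real" where "\<delta> = (\<lambda>n _. greedy_delta \<alpha> c d N n)"
  have "d / 2 \<le> \<delta> n \<beta>" if "1 \<le> n" for n \<beta>
    using greedy_delta_ge[where d=d, OF \<open>1 \<le> N\<close> that b_nonneg \<open>summable b\<close> slack_bound] tail_small
    by (simp add: \<delta>_def)
  then have "\<exists>\<epsilon>>0. \<forall>n\<ge>1. \<forall>\<beta>\<in>{-1, 1}. \<epsilon> \<le> \<delta> n \<beta>"
    using \<open>0 < d\<close> by (intro exI[of _ "d / 2"]) auto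
  moreover have "wb_seq \<alpha> d c N \<delta>"
    unfolding \<delta>_def using c_pos bryuno_dZ_pos[OF assms]
    by (intro wb_seq_greedy_delta less_imp_le) auto
  ultimately show "\<exists>C::real. C > 0 \<and> (\<exists>c::nat \<Rightarrow> real. (\<forall>n. c n > 0) \<and> summable c \<and>
        (\<exists>N::nat. N \<ge> 1 \<and> (\<exists>\<delta>. wb_seq \<alpha> d c N \<delta> \<and>
           (\<exists>\<epsilon>>0. \<forall>n\<ge>1. \<forall>\<beta>\<in>{-1, 1}. \<epsilon> \<le> \<delta> n \<beta>))))"
    using c_pos \<open>summable c\<close> \<open>1 \<le> N\<close> zero_less_one by blast
qed

theorem mainTheorem3:
  fixes \<alpha> :: real
  shows "weak_bryuno \<alpha> \<longleftrightarrow> bryuno \<alpha>"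
  using weak_bryuno_imp_bryuno bryuno_imp_weak_bryuno by blast

end
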